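(* Let $(X,\mu)$ and $(Y,\nu)$ be $\sigma$-finite measure spaces and let $\tau:Y\to X$ be a measurable nonsingular map (i.e. $\nu(\tau^{-1}(E))=0$ for every $\mu$-null set $E$). Let $0<p,q<\infty$ and let $\Phi:[0,\infty)\to[0,\infty)$ be such that $t\mapsto\Phi(t^{1/q})$ is a Young function. Then the composition operator $C_\tau f=f\circ\tau$ is bounded from $L^{p,q}(X,\mu)$ to $L^\Phi(Y,\nu)$ if and only if there exists a constant $D\ge1$ such that for all $\mu$-measurable sets $E\subset X$, \[ \nu(\tau^{-1}(E))\le\left\{\Phi\left(\frac{1}{D\mu(E)^{1/p}}\right)\right\}^{-1}. \]
   Context: A Young function is a map $\Psi:[0,\infty)\to[0,\infty)$ that is positive on $(0,\infty)$, convex, and satisfies $\lim_{t\downarrow0}\Psi(t)=\Psi(0)=0$. The Orlicz space $L^\Phi(Y,\nu)$ (for $\Phi$ with $\Phi((\cdot)^{1/q})$ a Young function) consists of measurable $g$ on $Y$ with $\int_Y\Phi(\epsilon|g|)\,d\nu<\infty$ for every $\epsilon>0$, with quasi-norm $\|g\|_{L^\Phi(Y)}=\inf\{\lambda>0:\int_Y\Phi(|g(y)|/\lambda)\,d\nu(y)\le1\}$. The Lorentz space $L^{p,q}(X,\mu)$ consists of measurable $f$ with $\|f\|_{L^{p,q}(X)}=\left(\int_0^\infty\left[t\,\mu(\{x:|f(x)|>t\})^{1/p}\right]^q\frac{dt}{t}\right)^{1/q}<\infty$. Boundedness means $\|C_\tau f\|_{L^\Phi(Y)}\le C\|f\|_{L^{p,q}(X)}$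 for some $C$ and all $f$. Conventions $1/0=\infty$, $\Phi(\infty)=\infty$, $1/\infty=0$ are used when $\mu(E)\in\{0,\infty\}$. *)

theory Defs
  imports "HOL-Analysis.Analysis"
begin

definition young_function :: "(real \<Rightarrow> real) \<Rightarrow> bool" where
  "young_function \<Psi> \<longleftrightarrow>
     (\<forall>t\<ge>0. 0 \<le> \<Psi> t) \<and> (\<forall>t>0. 0 < \<Psi> t) \<and> convex_on {0..} \<Psi> \<and>
     \<Psi> 0 = 0 \<and> (\<Psi> \<longlongrightarrow> 0) (at_right 0)"

definition distrib_fun :: "'a measure \<Rightarrow> ('a \<Rightarrow> real) \<Rightarrow> real \<Rightarrow> ennreal" where
  "distrib_fun M f t = emeasure M {x \<in> space M. \<bar>f x\<bar> > t}"

definition lorentz_integral :: "'a measure \<Rightarrow> real \<Rightarrow> real \<Rightarrow> ('a \<Rightarrow> real) \<Rightarrow> ennreal" where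
  "lorentz_integral M p q f =
     (\<integral>\<^sup>+ t. indicator {0<..} t *
        (if distrib_fun M f t = \<infinity> then \<infinity>
         else ennreal ((t * enn2real (distrib_fun M f t) powr (1/p)) powr q / t)) \<partial>lborel)"

definition in_lorentz :: "'a measure \<Rightarrow> real \<Rightarrow> real \<Rightarrow> ('a \<Rightarrow> real) \<Rightarrow> bool" where
  "in_lorentz M p q f \<longleftrightarrow> f \<in> borel_measurable M \<and> lorentz_integral M p q f < \<infinity>"

definition lorentz_norm :: "'a measure \<Rightarrow> real \<Rightarrow> real \<Rightarrow> ('a \<Rightarrow> real) \<Rightarrow> real" where
  "lorentz_norm M p q f = enn2real (lorentz_integral M p q f) powr (1/q)"

definition in_orlicz :: "'b measure \<Rightarrow> (real \<Rightarrow> real) \<Rightarrow> ('b \<Rightarrow> real) \<Rightarrow> bool" where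
  "in_orlicz N \<Phi> g \<longleftrightarrow> g \<in> borel_measurable N \<and>
     (\<forall>\<epsilon>>0. (\<integral>\<^sup>+ y. ennreal (\<Phi> (\<epsilon> * \<bar>g y\<bar>)) \<partial>N) < \<infinity>)"

definition orlicz_norm :: "'b measure \<Rightarrow> (real \<Rightarrow> real) \<Rightarrow> ('b \<Rightarrow> real) \<Rightarrow> real" where
  "orlicz_norm N \<Phi> g =
     Inf {c::real. c > 0 \<and> (\<integral>\<^sup>+ y. ennreal (\<Phi> (\<bar>g y\<bar> / c)) \<partial>N) \<le> 1}"

definition nonsingular :: "'b measure \<Rightarrow> 'a measure \<Rightarrow> ('b \<Rightarrow> 'a) \<Rightarrow> bool" where
  "nonsingular N M \<tau> \<longleftrightarrow>
     (\<forall>E\<in>sets M. emeasure M E = 0 \<longrightarrow> emeasure N (\<tau> -` E \<inter> space N) = 0)"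

text \<open>Bound {Phi(1/(D mu(E)^(1/p)))}^(-1) with conventions 1/0 = oo, Phi(oo) = oo, 1/oo = 0.\<close>
definition carleson_bound :: "(real \<Rightarrow> real) \<Rightarrow> real \<Rightarrow> real \<Rightarrow> ennreal \<Rightarrow> ennreal" where
  "carleson_bound \<Phi> p D m =
     (if m = 0 then 0
      else if m = \<infinity> then \<infinity>
      else inverse (ennreal (\<Phi> (1 / (D * enn2real m powr (1/p))))))"

end

(*
  Necessity: test the boundedness on indicator functions. The Lorentz norm of 1_E is a
  multiple of mu(E)^(1/p), while the Orlicz modular of 1_E o tau at level c is
  Phi(1/c) nu(tau^-1 E); an Orlicz norm below c = D mu(E)^(1/p) therefore forces
  nu(tau^-1 E) <= 1 / Phi(1/c).

  Sufficiency: by the layer-cake formula, the modular of f o tau at level c is at most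
  the integral of 2 Phi(2t/c)/t * nu(|f o tau| > t) dt. The Carleson condition bounds
  nu(|f o tau| > t) by 1/Phi(a) with a = 1/(D d(t)^(1/p)), d the distribution function
  of f, and the q-convexity Phi(B a) <= B^q Phi(a) for B <= 1 makes the integrand at most
  a multiple of the Lorentz density t^(q-1) d(t)^(q/p), as long as c dominates
  2 D t d(t)^(1/p). The Lorentz norm controls this weak-type quantity uniformly, which
  yields the norm bound; since the weak-type quantity also tends to 0 at 0 and at
  infinity, every modular of f o tau is finite.
*)
theory Submission
  imports Defs
begin

section \<open>Young functions of power type\<close>

locale q_young_function =
  fixes \<Phi> :: "real \<Rightarrow> real" and q :: real
  assumes young: "young_function (\<lambda>t. \<Phi> (t powr (1/q)))" and q_pos: "0 < q"
begin

lemma Phi_powr_powr_inverse [simp]: "0 \<le> x \<Longrightarrow> \<Phi> ((x powr q) powr (1/q)) = \<Phi> x"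
  using q_pos by (simp add: powr_powr)

lemma Phi_zero [simp]: "\<Phi> 0 = 0"
  using young by (simp add: young_function_def)

lemma Phi_nonneg:
  assumes "0 \<le> x"
  shows "0 \<le> \<Phi> x"
proof -
  have "\<forall>t\<ge>0. 0 \<le> \<Phi> (t powr (1/q))"
    using young by (simp add: young_function_def)
  then have "0 \<le> \<Phi> ((x powr q) powr (1/q))" by simp
  with assms show ?thesis by simp
qed

lemma Phi_pos:
  assumes "0 < x"
  shows "0 < \<Phi> x"
proof -
  have "\<forall>t>0. 0 < \<Phi> (t powr (1/q))"
    using young by (simp add: young_function_def)
  then have "0 < x powr q \<longrightarrow> 0 < \<Phi> ((x powr q) powr (1/q))" by blast
  then show ?thesis using assms by simp
qed

lemma Phi_scale_le:
  assumes "0 \<le> l" "l \<le> 1" "0 \<le> x"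
  shows "\<Phi> (l * x) \<le> l powr q * \<Phi> x"
proof -
  define \<Psi> where "\<Psi> t = \<Phi> (t powr (1/q))" for t
  have "convex_on {0..} \<Psi>" "\<Psi> 0 = 0"
    using young unfolding young_function_def \<Psi>_def by auto
  moreover have "l powr q \<le> 1"
    using assms q_pos by (intro powr_le1) auto
  ultimately have "\<Psi> (l powr q * x powr q) \<le> l powr q * \<Psi> (x powr q)"
    using convex_onD[of "{0..}" \<Psi> "l powr q" 0 "x powr q"] by simp
  moreover have "l powr q * x powr q = (l * x) powr q"
    using assms by (simp add: powr_mult)
  ultimately show ?thesis
    using assms by (simp add: \<Psi>_def)
qed

lemma Phi_mono:
  assumes "0 \<le> x" "x \<le> y"
  shows "\<Phi> x \<le> \<Phi> y"
proof (cases "y = 0")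
  case False
  then have y: "0 < y" using assms by simp
  have "\<Phi> x = \<Phi> ((x / y) * y)" using y by simp
  also have "\<dots> \<le> (x / y) powr q * \<Phi> y"
    using assms y by (intro Phi_scale_le) auto
  also have "\<dots> \<le> \<Phi> y"
  proof (rule mult_left_le_one_le)
    show "(x / y) powr q \<le> 1"
      using assms y q_pos by (intro powr_le1) auto
  qed (use Phi_nonneg[of y] y in auto)
  finally show ?thesis .
qed (use assms in simp)

lemma borel_measurable_Phi_max0 [measurable]: "(\<lambda>x. \<Phi> (max 0 x)) \<in> borel_measurable borel"
  by (rule borel_measurable_mono) (simp add: mono_def Phi_mono)

lemma borel_measurable_Phi_nonneg:
  assumes "f \<in> borel_measurable N" "\<And>y. y \<in> space N \<Longrightarrow> 0 \<le> f y"
  shows "(\<lambda>y. \<Phi> (f y)) \<in> borel_measurable N"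
proof -
  have "(\<lambda>y. \<Phi> (max 0 (f y))) \<in> borel_measurable N"
    using assms(1) by measurable
  then show ?thesis
    by (rule measurable_cong[THEN iffD1, rotated]) (simp add: assms(2) max_absorb2)
qed

end

section \<open>The Lorentz integral\<close>

definition lorentz_density :: "'a measure \<Rightarrow> real \<Rightarrow> real \<Rightarrow> ('a \<Rightarrow> real) \<Rightarrow> real \<Rightarrow> ennreal" where
  "lorentz_density M p q f t = indicator {0<..} t *
     (if distrib_fun M f t = \<infinity> then \<infinity>
      else ennreal ((t * enn2real (distrib_fun M f t) powr (1/p)) powr q / t))"

lemma lorentz_integral_eq_density:
  "lorentz_integral M p q f = (\<integral>\<^sup>+ t. lorentz_density M p q f t \<partial>lborel)"
  unfolding lorentz_integral_def lorentz_density_def ..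

lemma lorentz_density_nonpos: "t \<le> 0 \<Longrightarrow> lorentz_density M p q f t = 0"
  by (simp add: lorentz_density_def)

lemma lorentz_density_finite:
  "0 < t \<Longrightarrow> distrib_fun M f t \<noteq> \<infinity> \<Longrightarrow>
    lorentz_density M p q f t = ennreal ((t * enn2real (distrib_fun M f t) powr (1/p)) powr q / t)"
  by (simp add: lorentz_density_def)

lemma lorentz_density_infinite:
  "0 < t \<Longrightarrow> distrib_fun M f t = \<infinity> \<Longrightarrow> lorentz_density M p q f t = \<infinity>"
  by (simp add: lorentz_density_def)

lemma distrib_set_in_sets:
  fixes f :: "'a \<Rightarrow> real"
  assumes [measurable]: "f \<in> borel_measurable M"
  shows "{x \<in> space M. t < \<bar>f x\<bar>} \<in> sets M"
  by measurable

lemma distrib_fun_antimono: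
  assumes "f \<in> borel_measurable M" "s \<le> t"
  shows "distrib_fun M f t \<le> distrib_fun M f s"
  unfolding distrib_fun_def using assms by (intro emeasure_mono) auto

lemma distrib_fun_comp:
  assumes "\<tau> \<in> N \<rightarrow>\<^sub>M M"
  shows "distrib_fun N (f \<circ> \<tau>) t = emeasure N (\<tau> -` {x \<in> space M. t < \<bar>f x\<bar>} \<inter> space N)"
  using measurable_space[OF assms] unfolding distrib_fun_def
  by (intro arg_cong[where f="emeasure N"]) auto

lemma borel_measurable_distrib_fun:
  assumes "sigma_finite_measure M" and [measurable]: "f \<in> borel_measurable M"
  shows "distrib_fun M f \<in> borel_measurable lborel"
proof -
  interpret sigma_finite_measure M by fact
  let ?Q = "{z \<in> space (lborel \<Otimes>\<^sub>M M). fst z < \<bar>f (snd z)\<bar>}"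
  have "?Q \<in> sets (lborel \<Otimes>\<^sub>M M)" by measurable
  then have "(\<lambda>t. emeasure M (Pair t -` ?Q)) \<in> borel_measurable lborel"
    by (rule measurable_emeasure_Pair)
  moreover have "Pair t -` ?Q = {x \<in> space M. t < \<bar>f x\<bar>}" for t
    by (auto simp: space_pair_measure)
  ultimately show ?thesis unfolding distrib_fun_def by simp
qed

lemma borel_measurable_lorentz_density:
  assumes "sigma_finite_measure M" "f \<in> borel_measurable M"
  shows "lorentz_density M p q f \<in> borel_measurable lborel"
  using borel_measurable_distrib_fun[OF assms] unfolding lorentz_density_def by measurable

lemma lorentz_density_ge_on_window:
  assumes f: "f \<in> borel_measurable M" and p: "0 < p" and q: "0 < q" and t: "b/2 < t" "t < b"
  shows "ennreal ((b/2 * enn2real (distrib_fun M f b) powr (1/p)) powr q / b) \<le> lorentz_density M p q f t"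
proof (cases "distrib_fun M f t = \<infinity>")
  case False
  have "distrib_fun M f b \<le> distrib_fun M f t"
    using distrib_fun_antimono[OF f] t by simp
  then have "enn2real (distrib_fun M f b) \<le> enn2real (distrib_fun M f t)"
    using False by (simp add: enn2real_mono top.not_eq_extremum)
  then have "b/2 * enn2real (distrib_fun M f b) powr (1/p) \<le> t * enn2real (distrib_fun M f t) powr (1/p)"
    using t p by (intro mult_mono powr_mono2) auto
  then have "(b/2 * enn2real (distrib_fun M f b) powr (1/p)) powr q
      \<le> (t * enn2real (distrib_fun M f t) powr (1/p)) powr q"
    using t q by (intro powr_mono2) auto
  then have "(b/2 * enn2real (distrib_fun M f b) powr (1/p)) powr q / b
      \<le> (t * enn2real (distrib_fun M f t) powr (1/p)) powr q / t"
    using t by (intro frac_le) auto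
  then show ?thesis
    using t False by (simp add: lorentz_density_finite ennreal_leI)
qed (use t in \<open>simp add: lorentz_density_infinite\<close>)

lemma lorentz_density_window_lower:
  assumes f: "f \<in> borel_measurable M" and p: "0 < p" and q: "0 < q" and b: "0 < b"
  shows "ennreal ((b * enn2real (distrib_fun M f b) powr (1/p)) powr q)
    \<le> ennreal (2 powr (q + 1)) * (\<integral>\<^sup>+ t. indicator {b/2<..<b} t * lorentz_density M p q f t \<partial>lborel)"
proof -
  define u where "u = b * enn2real (distrib_fun M f b) powr (1/p)"
  define k where "k = (u/2) powr q / b"
  have u: "0 \<le> u" and k: "0 \<le> k" using b by (simp_all add: u_def k_def)
  have "ennreal k * indicator {b/2<..<b} t \<le> indicator {b/2<..<b} t * lorentz_density M p q f t" for t
    using lorentz_density_ge_on_window[OF f p q, of b t]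
    by (simp add: k_def u_def mult.assoc split: split_indicator)
  then have "(\<integral>\<^sup>+ t. ennreal k * indicator {b/2<..<b} t \<partial>lborel)
      \<le> (\<integral>\<^sup>+ t. indicator {b/2<..<b} t * lorentz_density M p q f t \<partial>lborel)"
    by (rule nn_integral_mono)
  moreover have "(\<integral>\<^sup>+ t. ennreal k * indicator {b/2<..<b} t \<partial>lborel) = ennreal (k * (b/2))"
    using b k by (simp add: nn_integral_cmult_indicator flip: ennreal_mult)
  ultimately have window: "ennreal (k * (b/2))
      \<le> (\<integral>\<^sup>+ t. indicator {b/2<..<b} t * lorentz_density M p q f t \<partial>lborel)"
    by simp
  have "u powr q = 2 powr (q + 1) * (k * (b/2))"
    using b u by (simp add: k_def powr_divide powr_add)
  then have "ennreal (u powr q) = ennreal (2 powr (q + 1) * (k * (b/2)))" by (simp only:)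
  also have "\<dots> = ennreal (2 powr (q + 1)) * ennreal (k * (b/2))"
    using b k by (intro ennreal_mult) auto
  also have "\<dots> \<le> ennreal (2 powr (q + 1))
      * (\<integral>\<^sup>+ t. indicator {b/2<..<b} t * lorentz_density M p q f t \<partial>lborel)"
    by (rule mult_left_mono[OF window]) simp
  finally show ?thesis by (simp only: u_def)
qed

lemma lorentz_density_window_infinite:
  assumes f: "f \<in> borel_measurable M" and b: "0 < b" and d_top: "distrib_fun M f b = \<infinity>"
  shows "(\<integral>\<^sup>+ t. indicator {b/2<..<b} t * lorentz_density M p q f t \<partial>lborel) = \<infinity>"
proof -
  have eq: "indicator {b/2<..<b} t * lorentz_density M p q f t = \<infinity> * indicator {b/2<..<b} t" for t
  proof (cases "t \<in> {b/2<..<b}")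
    case True
    then have "distrib_fun M f b \<le> distrib_fun M f t"
      using distrib_fun_antimono[OF f] by simp
    then have "distrib_fun M f t = \<infinity>" using d_top by (simp add: top_unique)
    then show ?thesis using True b by (simp add: lorentz_density_infinite)
  qed simp
  have "(\<integral>\<^sup>+ t. indicator {b/2<..<b} t * lorentz_density M p q f t \<partial>lborel)
      = (\<integral>\<^sup>+ t. \<infinity> * indicator {b/2<..<b} t \<partial>lborel)"
    by (intro nn_integral_cong eq)
  also have "\<dots> = \<infinity> * emeasure lborel {b/2<..<b}"
    by (rule nn_integral_cmult_indicator) simp
  also have "\<dots> = \<infinity>"
    using b by (simp add: ennreal_top_mult)
  finally show ?thesis .
qed

lemma nn_integral_indicator_le_lorentz_integral:
  "(\<integral>\<^sup>+ t. indicator S t * lorentz_density M p q f t \<partial>lborel) \<le> lorentz_integral M p q f"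
  unfolding lorentz_integral_eq_density
  by (intro nn_integral_mono) (simp split: split_indicator)

lemma in_lorentz_distrib_finite:
  assumes L: "in_lorentz M p q f" and t: "0 < t"
  shows "distrib_fun M f t \<noteq> \<infinity>"
proof
  assume "distrib_fun M f t = \<infinity>"
  then have "(\<integral>\<^sup>+ s. indicator {t/2<..<t} s * lorentz_density M p q f s \<partial>lborel) = \<infinity>"
    using L t by (intro lorentz_density_window_infinite) (auto simp: in_lorentz_def)
  then have "lorentz_integral M p q f = \<infinity>"
    using nn_integral_indicator_le_lorentz_integral[of "{t/2<..<t}" M p q f] by (simp add: top_unique)
  then show False using L by (simp add: in_lorentz_def)
qed

lemma lorentz_weak_le_window:
  assumes L: "in_lorentz M p q f" and p: "0 < p" and q: "0 < q" and t: "0 < t"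
  shows "(t * enn2real (distrib_fun M f t) powr (1/p)) powr q
    \<le> 2 powr (q + 1) * enn2real (\<integral>\<^sup>+ s. indicator {t/2<..<t} s * lorentz_density M p q f s \<partial>lborel)"
proof -
  let ?W = "\<integral>\<^sup>+ s. indicator {t/2<..<t} s * lorentz_density M p q f s \<partial>lborel"
  have f: "f \<in> borel_measurable M" using L by (simp add: in_lorentz_def)
  have "?W \<noteq> \<infinity>"
    using L nn_integral_indicator_le_lorentz_integral[of "{t/2<..<t}" M p q f] by (auto simp: in_lorentz_def top_unique)
  then have "ennreal (2 powr (q + 1)) * ?W = ennreal (2 powr (q + 1) * enn2real ?W)"
    by (simp add: ennreal_mult ennreal_enn2real_if)
  then show ?thesis
    using lorentz_density_window_lower[OF f p q t]
    by (simp add: ennreal_le_iff)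
qed

lemma lorentz_weak_type:
  assumes L: "in_lorentz M p q f" and p: "0 < p" and q: "0 < q" and t: "0 < t"
  shows "t * enn2real (distrib_fun M f t) powr (1/p)
    \<le> (2 powr (q + 1) * enn2real (lorentz_integral M p q f)) powr (1/q)"
proof -
  define u where "u = t * enn2real (distrib_fun M f t) powr (1/p)"
  have "enn2real (\<integral>\<^sup>+ s. indicator {t/2<..<t} s * lorentz_density M p q f s \<partial>lborel)
      \<le> enn2real (lorentz_integral M p q f)"
    using L by (intro enn2real_mono nn_integral_indicator_le_lorentz_integral) (simp add: in_lorentz_def)
  then have "2 powr (q + 1) * enn2real (\<integral>\<^sup>+ s. indicator {t/2<..<t} s * lorentz_density M p q f s \<partial>lborel)
      \<le> 2 powr (q + 1) * enn2real (lorentz_integral M p q f)"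
    by (rule mult_left_mono) simp
  then have "u powr q \<le> 2 powr (q + 1) * enn2real (lorentz_integral M p q f)"
    using lorentz_weak_le_window[OF assms] unfolding u_def by (rule order_trans[rotated])
  then have "(u powr q) powr (1/q) \<le> (2 powr (q + 1) * enn2real (lorentz_integral M p q f)) powr (1/q)"
    using q by (intro powr_mono2) auto
  then show ?thesis
    using q t by (simp add: powr_powr u_def)
qed

lemma nn_integral_decseq_indicator_small:
  fixes g :: "'a \<Rightarrow> ennreal" and S :: "nat \<Rightarrow> 'a set"
  assumes [measurable]: "g \<in> borel_measurable M" "\<And>n. S n \<in> sets M"
    and fin: "(\<integral>\<^sup>+ x. g x \<partial>M) \<noteq> \<infinity>" and dec: "decseq S"
    and vanish: "\<And>x. x \<in> space M \<Longrightarrow> (\<forall>n. x \<in> S n) \<Longrightarrow> g x = 0" and \<delta>: "0 < \<delta>"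
  shows "\<exists>n. (\<integral>\<^sup>+ x. indicator (S n) x * g x \<partial>M) < \<delta>"
proof -
  define F where "F n x = indicator (S n) x * g x" for n x
  have "decseq F"
  proof (intro decseq_SucI le_funI)
    fix n x
    have "S (Suc n) \<subseteq> S n" using dec by (simp add: decseq_Suc_iff)
    then show "F (Suc n) x \<le> F n x"
      unfolding F_def by (auto split: split_indicator)
  qed
  moreover have F_meas: "F n \<in> borel_measurable M" for n unfolding F_def by measurable
  moreover have "(\<integral>\<^sup>+ x. F n x \<partial>M) < \<infinity>" for n
  proof -
    have "(\<integral>\<^sup>+ x. F n x \<partial>M) \<le> (\<integral>\<^sup>+ x. g x \<partial>M)"
      unfolding F_def by (intro nn_integral_mono) (simp split: split_indicator)
    then show ?thesis using fin by (simp add: le_less_trans less_top)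
  qed
  ultimately have "(\<integral>\<^sup>+ x. (INF n. F n x) \<partial>M) = (INF n. integral\<^sup>N M (F n))"
    by (rule nn_integral_monotone_convergence_INF_decseq)
  moreover have "(\<integral>\<^sup>+ x. (INF n. F n x) \<partial>M) = 0"
  proof (rule nn_integral_0_iff_AE[THEN iffD2])
    show "(\<lambda>x. INF n. F n x) \<in> borel_measurable M" by (intro borel_measurable_INF F_meas) simp
    show "AE x in M. (INF n. F n x) = 0"
    proof (rule AE_I2)
      fix x assume x: "x \<in> space M"
      show "(INF n. F n x) = 0"
      proof (cases "\<forall>n. x \<in> S n")
        case True then show ?thesis using vanish[OF x] by (simp add: F_def)
      next
        case False
        then obtain n where "x \<notin> S n" by blast
        then have "F n x = 0" by (simp add: F_def)
        then show ?thesis by (metis INF_lower UNIV_I le_zero_eq)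
      qed
    qed
  qed
  ultimately have "(INF n. integral\<^sup>N M (F n)) < \<delta>" using \<delta> by simp
  then obtain n where "integral\<^sup>N M (F n) < \<delta>" by (auto simp: INF_less_iff)
  then show ?thesis unfolding F_def by blast
qed

lemma lorentz_weak_le_of_window_less:
  assumes L: "in_lorentz M p q f" and p: "0 < p" and q: "0 < q" and t: "0 < t" and \<delta>: "0 < \<delta>"
    and small: "(\<integral>\<^sup>+ s. indicator {t/2<..<t} s * lorentz_density M p q f s \<partial>lborel)
      < ennreal (\<delta> powr q / 2 powr (q + 1))"
  shows "t * enn2real (distrib_fun M f t) powr (1/p) \<le> \<delta>"
proof -
  have "enn2real (\<integral>\<^sup>+ s. indicator {t/2<..<t} s * lorentz_density M p q f s \<partial>lborel)
      < \<delta> powr q / 2 powr (q + 1)"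
    using small by (metis enn2real_less_iff ennreal_less_top order.strict_trans)
  then have "(t * enn2real (distrib_fun M f t) powr (1/p)) powr q < \<delta> powr q"
    using lorentz_weak_le_window[OF L p q t] by (simp add: field_simps)
  then show ?thesis
    using q \<delta> t by (smt (verit) powr_less_mono2 powr_ge_zero)
qed

text \<open>The mass of the Lorentz density on \<open>S n = (-\<infinity>, 1/(n+1)) \<union> [n, \<infinity>)\<close> tends to \<open>0\<close>, and
  \<open>S n\<close> contains the window \<open>(t/2, t)\<close> whenever \<open>t \<le> 1/(n+1)\<close> or \<open>t \<ge> 2n\<close>.\<close>
lemma lorentz_weak_tails:
  assumes M: "sigma_finite_measure M" and L: "in_lorentz M p q f"
    and p: "0 < p" and q: "0 < q" and \<delta>: "0 < \<delta>"
  shows "\<exists>T\<^sub>0>0. \<exists>T. \<forall>t>0. t \<le> T\<^sub>0 \<or> T \<le> t \<longrightarrow> t * enn2real (distrib_fun M f t) powr (1/p) \<le> \<delta>"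
proof -
  have f: "f \<in> borel_measurable M" and fin: "lorentz_integral M p q f \<noteq> \<infinity>"
    using L by (auto simp: in_lorentz_def)
  define S where "S n = {..<1 / (real n + 1)} \<union> {real n..}" for n
  have "decseq S"
  proof (rule decseq_SucI)
    fix n
    have "1 / (real (Suc n) + 1) \<le> 1 / (real n + 1)"
      by (intro divide_left_mono) auto
    then show "S (Suc n) \<subseteq> S n" by (auto simp: S_def)
  qed
  moreover have "t \<le> 0" if "\<forall>n. t \<in> S n" for t
  proof (rule ccontr)
    assume "\<not> t \<le> 0"
    then obtain n where n: "max t (1/t) < real n" using reals_Archimedean2 by blast
    then have "1 / (real n + 1) \<le> t" using \<open>\<not> t \<le> 0\<close> by (auto simp: field_simps)
    then show False using that[rule_format, of n] n by (auto simp: S_def)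
  qed
  ultimately obtain n where n: "(\<integral>\<^sup>+ t. indicator (S n) t * lorentz_density M p q f t \<partial>lborel)
      < ennreal (\<delta> powr q / 2 powr (q + 1))"
    using nn_integral_decseq_indicator_small[of "lorentz_density M p q f" lborel S]
      borel_measurable_lorentz_density[OF M f] fin \<delta>
    by (fastforce simp: S_def lorentz_integral_eq_density lorentz_density_nonpos)
  show ?thesis
  proof (intro exI allI impI conjI)
    fix t :: real assume "0 < t" and "t \<le> 1 / (real n + 1) \<or> 2 * real n \<le> t"
    then have "{t/2<..<t} \<subseteq> S n" by (auto simp: S_def)
    then have "(\<integral>\<^sup>+ s. indicator {t/2<..<t} s * lorentz_density M p q f s \<partial>lborel)
        < ennreal (\<delta> powr q / 2 powr (q + 1))"
      by (intro le_less_trans[OF _ n] nn_integral_mono mult_right_mono) (auto split: split_indicator)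
    then show "t * enn2real (distrib_fun M f t) powr (1/p) \<le> \<delta>"
      by (rule lorentz_weak_le_of_window_less[OF L p q \<open>0 < t\<close> \<delta>])
  qed simp
qed

lemma distrib_fun_indicator:
  assumes "E \<in> sets M" "0 \<le> t"
  shows "distrib_fun M (indicator E :: 'a \<Rightarrow> real) t = (if t < 1 then emeasure M E else 0)"
proof -
  have "{x \<in> space M. t < \<bar>indicator E x :: real\<bar>} = (if t < 1 then E else {})"
    using sets.sets_into_space[OF assms(1)] assms(2) by (auto split: split_indicator)
  then show ?thesis by (simp add: distrib_fun_def)
qed

lemma lorentz_density_indicator_le:
  assumes E: "E \<in> sets M" and fin: "emeasure M E \<noteq> \<infinity>"
  shows "lorentz_density M p q (indicator E :: 'a \<Rightarrow> real) t
    \<le> ennreal (enn2real (emeasure M E) powr (q/p)) * (ennreal (t powr (q - 1)) * indicator {0..1} t)"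
proof -
  define m where "m = enn2real (emeasure M E)"
  have d: "distrib_fun M (indicator E :: 'a \<Rightarrow> real) t = (if t < 1 then ennreal m else 0)" if "0 \<le> t"
    using distrib_fun_indicator[OF E that] fin by (simp add: m_def ennreal_enn2real_if)
  consider "t \<le> 0" | "0 < t" "t < 1" | "1 \<le> t" by linarith
  then show ?thesis
  proof cases
    case 2
    have "(t * m powr (1/p)) powr q / t = m powr (q/p) * t powr (q - 1)"
      using 2 by (simp add: m_def powr_mult powr_powr powr_diff)
    then show ?thesis
      using 2 d by (simp add: lorentz_density_finite ennreal_mult' mult.commute m_def)
  next
    case 3
    then show ?thesis using d by (simp add: lorentz_density_finite)
  qed (simp add: lorentz_density_nonpos)
qed

lemma lorentz_integral_indicator_le:
  assumes E: "E \<in> sets M" and fin: "emeasure M E \<noteq> \<infinity>" and p: "0 < p" and q: "0 < q"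
  shows "lorentz_integral M p q (indicator E :: 'a \<Rightarrow> real)
    \<le> ennreal (enn2real (emeasure M E) powr (q/p) / q)"
proof -
  define m where "m = enn2real (emeasure M E)"
  have "lorentz_density M p q (indicator E) t
      \<le> ennreal (m powr (q/p)) * (ennreal (t powr (q - 1)) * indicator {0..1} t)" for t
    unfolding m_def by (rule lorentz_density_indicator_le[OF E fin])
  then have "lorentz_integral M p q (indicator E)
      \<le> (\<integral>\<^sup>+ t. ennreal (m powr (q/p)) * (ennreal (t powr (q - 1)) * indicator {0..1} t) \<partial>lborel)"
    unfolding lorentz_integral_eq_density by (rule nn_integral_mono)
  also have "\<dots> = ennreal (m powr (q/p)) * ennreal (1/q)"
  proof -
    have "((\<lambda>t. t powr (q - 1)) has_integral (1/q)) {0..1}"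
      using has_integral_powr_from_0[of "q - 1" 1] q by simp
    from nn_integral_has_integral_lebesgue'[OF _ this]
    have "(\<integral>\<^sup>+ t. ennreal (t powr (q - 1)) * indicator {0..1} t \<partial>lborel) = ennreal (1/q)"
      by simp
    then show ?thesis by (subst nn_integral_cmult) auto
  qed
  also have "\<dots> = ennreal (m powr (q/p) / q)"
    using q by (simp add: ennreal_mult[symmetric])
  finally show ?thesis by (simp add: m_def)
qed

lemma in_lorentz_indicator:
  assumes "E \<in> sets M" "emeasure M E \<noteq> \<infinity>" "0 < p" "0 < q"
  shows "in_lorentz M p q (indicator E :: 'a \<Rightarrow> real)"
proof -
  have "lorentz_integral M p q (indicator E :: 'a \<Rightarrow> real) < \<infinity>"
    using lorentz_integral_indicator_le[OF assms] by (rule le_less_trans) simp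
  then show ?thesis using assms(1) by (simp add: in_lorentz_def)
qed

lemma lorentz_norm_indicator_le:
  assumes "E \<in> sets M" "emeasure M E \<noteq> \<infinity>" "0 < p" and q: "0 < q"
  shows "lorentz_norm M p q (indicator E :: 'a \<Rightarrow> real)
    \<le> (1/q) powr (1/q) * enn2real (emeasure M E) powr (1/p)"
proof -
  let ?m = "enn2real (emeasure M E)"
  have "enn2real (lorentz_integral M p q (indicator E :: 'a \<Rightarrow> real)) \<le> ?m powr (q/p) * (1/q)"
    using lorentz_integral_indicator_le[OF assms] q by (intro enn2real_leI) auto
  then have "lorentz_norm M p q (indicator E :: 'a \<Rightarrow> real) \<le> (?m powr (q/p) * (1/q)) powr (1/q)"
    unfolding lorentz_norm_def using q by (intro powr_mono2) auto
  also have "\<dots> = (1/q) powr (1/q) * ?m powr (1/p)"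
    using q by (subst powr_mult) (auto simp: powr_powr)
  finally show ?thesis .
qed

section \<open>The Orlicz norm\<close>

lemma orlicz_norm_le:
  assumes "0 < c" "(\<integral>\<^sup>+ y. ennreal (\<Phi> (\<bar>g y\<bar> / c)) \<partial>N) \<le> 1"
  shows "orlicz_norm N \<Phi> g \<le> c"
  unfolding orlicz_norm_def using assms by (intro cInf_lower) (auto intro: bdd_belowI[of _ 0])

lemma orlicz_norm_le_of_gt:
  assumes "0 \<le> c\<^sub>0" "\<And>c. c\<^sub>0 < c \<Longrightarrow> (\<integral>\<^sup>+ y. ennreal (\<Phi> (\<bar>g y\<bar> / c)) \<partial>N) \<le> 1"
  shows "orlicz_norm N \<Phi> g \<le> c\<^sub>0"
proof (rule dense_ge)
  fix c assume "c\<^sub>0 < c"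
  then show "orlicz_norm N \<Phi> g \<le> c"
    using assms by (intro orlicz_norm_le) auto
qed

context q_young_function
begin

lemma in_orlicz_modular_le_one:
  assumes g: "in_orlicz N \<Phi> g"
  shows "\<exists>c>0. (\<integral>\<^sup>+ y. ennreal (\<Phi> (\<bar>g y\<bar> / c)) \<partial>N) \<le> 1"
proof -
  let ?I = "\<integral>\<^sup>+ y. ennreal (\<Phi> \<bar>g y\<bar>) \<partial>N"
  have "?I < \<infinity>"
    using g unfolding in_orlicz_def by (elim conjE allE[of _ 1]) simp
  then have I: "?I = ennreal (enn2real ?I)" by (simp add: less_top)
  define c where "c = max 1 (enn2real ?I powr (1/q))"
  have c: "1 \<le> c" by (simp add: c_def)
  have "enn2real ?I = (enn2real ?I powr (1/q)) powr q"
    using q_pos by (simp add: powr_powr)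
  also have "\<dots> \<le> c powr q"
    using q_pos by (intro powr_mono2) (auto simp: c_def)
  finally have I_le: "(1/c) powr q * enn2real ?I \<le> 1"
    using c by (simp add: powr_divide field_simps)
  have "(\<integral>\<^sup>+ y. ennreal (\<Phi> (\<bar>g y\<bar> / c)) \<partial>N) \<le> (\<integral>\<^sup>+ y. ennreal ((1/c) powr q) * ennreal (\<Phi> \<bar>g y\<bar>) \<partial>N)"
  proof (rule nn_integral_mono)
    fix y
    have "\<Phi> ((1/c) * \<bar>g y\<bar>) \<le> (1/c) powr q * \<Phi> \<bar>g y\<bar>"
      using c by (intro Phi_scale_le) auto
    then show "ennreal (\<Phi> (\<bar>g y\<bar> / c)) \<le> ennreal ((1/c) powr q) * ennreal (\<Phi> \<bar>g y\<bar>)"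
      by (simp add: ennreal_mult'[symmetric] ennreal_leI)
  qed
  also have "\<dots> = ennreal ((1/c) powr q * enn2real ?I)"
    using g Phi_nonneg
    by (subst nn_integral_cmult) (auto simp: in_orlicz_def ennreal_mult I[symmetric] intro: borel_measurable_Phi_nonneg)
  also have "\<dots> \<le> 1"
    using I_le by simp
  finally show ?thesis using c by (intro exI[of _ c]) auto
qed

lemma orlicz_modular_le_one_of_norm_less:
  assumes g: "in_orlicz N \<Phi> g" and less: "orlicz_norm N \<Phi> g < c"
  shows "(\<integral>\<^sup>+ y. ennreal (\<Phi> (\<bar>g y\<bar> / c)) \<partial>N) \<le> 1"
proof -
  let ?S = "{c. 0 < c \<and> (\<integral>\<^sup>+ y. ennreal (\<Phi> (\<bar>g y\<bar> / c)) \<partial>N) \<le> 1}"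
  have "?S \<noteq> {}" using in_orlicz_modular_le_one[OF g] by blast
  moreover have "bdd_below ?S" by (auto intro: bdd_belowI[of _ 0])
  ultimately obtain s where s: "s \<in> ?S" "s < c"
    using less by (auto simp: orlicz_norm_def cInf_less_iff)
  have "(\<integral>\<^sup>+ y. ennreal (\<Phi> (\<bar>g y\<bar> / c)) \<partial>N) \<le> (\<integral>\<^sup>+ y. ennreal (\<Phi> (\<bar>g y\<bar> / s)) \<partial>N)"
    using s by (intro nn_integral_mono ennreal_leI Phi_mono) (auto intro: divide_left_mono)
  also have "\<dots> \<le> 1" using s by simp
  finally show ?thesis .
qed

lemma Phi_le_nn_integral:
  assumes c: "0 < c" and r: "0 \<le> r"
  shows "ennreal (\<Phi> (r/c)) \<le> (\<integral>\<^sup>+ t. indicator {0<..<r} t * ennreal (2 * \<Phi> (2*t/c) / t) \<partial>lborel)"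
proof (cases "r = 0")
  case False
  then have r0: "0 < r" using r by simp
  have "ennreal (2 * \<Phi> (r/c) / r) * indicator {r/2..<r} t \<le> indicator {0<..<r} t * ennreal (2 * \<Phi> (2*t/c) / t)" for t
  proof (cases "t \<in> {r/2..<r}")
    case True
    then have t: "0 < t" "r \<le> 2 * t" "t < r" using r0 by auto
    have "\<Phi> (r/c) \<le> \<Phi> (2*t/c)"
      using t c r0 by (intro Phi_mono divide_right_mono) auto
    then have "2 * \<Phi> (r/c) / r \<le> 2 * \<Phi> (2*t/c) / t"
      using t Phi_nonneg[of "r/c"] r0 c by (intro frac_le) auto
    then show ?thesis using True t by (simp add: ennreal_leI)
  qed simp
  then have "(\<integral>\<^sup>+ t. ennreal (2 * \<Phi> (r/c) / r) * indicator {r/2..<r} t \<partial>lborel)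
      \<le> (\<integral>\<^sup>+ t. indicator {0<..<r} t * ennreal (2 * \<Phi> (2*t/c) / t) \<partial>lborel)"
    by (rule nn_integral_mono)
  moreover have "(\<integral>\<^sup>+ t. ennreal (2 * \<Phi> (r/c) / r) * indicator {r/2..<r} t \<partial>lborel) = ennreal (\<Phi> (r/c))"
    using r0 c Phi_nonneg[of "r/c"] by (simp add: nn_integral_cmult_indicator flip: ennreal_mult)
  ultimately show ?thesis by simp
qed simp

lemma nn_integral_Phi_le_distrib:
  assumes N: "sigma_finite_measure N" and g[measurable]: "g \<in> borel_measurable N" and c: "0 < c"
  shows "(\<integral>\<^sup>+ y. ennreal (\<Phi> (\<bar>g y\<bar> / c)) \<partial>N)
    \<le> (\<integral>\<^sup>+ t. indicator {0<..} t * ennreal (2 * \<Phi> (2*t/c) / t) * distrib_fun N g t \<partial>lborel)"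
proof -
  define H where "H y t = ennreal (if 0 < t \<and> t < \<bar>g y\<bar> then 2 * \<Phi> (max 0 (2*t/c)) / t else 0)" for y t
    \<comment> \<open>\<open>max 0\<close> only serves measurability: nothing is assumed about \<open>\<Phi>\<close> on negative reals\<close>
  have H_meas: "(\<lambda>(y, t). H y t) \<in> borel_measurable (N \<Otimes>\<^sub>M lborel)"
    unfolding H_def by measurable
  have "ennreal (\<Phi> (\<bar>g y\<bar> / c)) \<le> (\<integral>\<^sup>+ t. H y t \<partial>lborel)" for y
  proof -
    have "(\<integral>\<^sup>+ t. indicator {0<..<\<bar>g y\<bar>} t * ennreal (2 * \<Phi> (2*t/c) / t) \<partial>lborel)
        \<le> (\<integral>\<^sup>+ t. H y t \<partial>lborel)"
      using c by (intro nn_integral_mono) (simp add: H_def split: split_indicator)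
    with Phi_le_nn_integral[OF c abs_ge_zero[of "g y"]] show ?thesis
      by (rule order_trans)
  qed
  then have "(\<integral>\<^sup>+ y. ennreal (\<Phi> (\<bar>g y\<bar> / c)) \<partial>N) \<le> (\<integral>\<^sup>+ y. (\<integral>\<^sup>+ t. H y t \<partial>lborel) \<partial>N)"
    by (rule nn_integral_mono)
  also have "\<dots> = (\<integral>\<^sup>+ t. (\<integral>\<^sup>+ y. H y t \<partial>N) \<partial>lborel)"
  proof -
    interpret pair_sigma_finite N lborel
      unfolding pair_sigma_finite_def using N lborel.sigma_finite_measure_axioms by auto
    show ?thesis using Fubini'[OF H_meas] by simp
  qed
  also have "\<dots> = (\<integral>\<^sup>+ t. indicator {0<..} t * ennreal (2 * \<Phi> (2*t/c) / t) * distrib_fun N g t \<partial>lborel)"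
  proof (rule nn_integral_cong)
    fix t :: real
    have "(\<integral>\<^sup>+ y. H y t \<partial>N)
        = (\<integral>\<^sup>+ y. ennreal (indicator {0<..} t * (2 * \<Phi> (2*t/c) / t)) * indicator {y \<in> space N. t < \<bar>g y\<bar>} y \<partial>N)"
      using c by (intro nn_integral_cong) (auto simp: H_def split: split_indicator)
    also have "\<dots> = indicator {0<..} t * ennreal (2 * \<Phi> (2*t/c) / t) * distrib_fun N g t"
      by (subst nn_integral_cmult_indicator) (auto simp: distrib_fun_def split: split_indicator)
    finally show "(\<integral>\<^sup>+ y. H y t \<partial>N) = indicator {0<..} t * ennreal (2 * \<Phi> (2*t/c) / t) * distrib_fun N g t" .
  qed
  finally show ?thesis .
qed

section \<open>Composition operators\<close>

lemma carleson_bound_pos_real: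
  assumes "0 < D" "0 < m"
  shows "carleson_bound \<Phi> p D (ennreal m) = ennreal (1 / \<Phi> (1 / (D * m powr (1/p))))"
  using assms Phi_pos[of "1 / (D * m powr (1/p))"]
  by (simp add: carleson_bound_def inverse_ennreal divide_inverse)

lemma carleson_bound_finite:
  assumes "0 < D" "m \<noteq> \<infinity>"
  shows "carleson_bound \<Phi> p D m \<noteq> \<infinity>"
proof (cases "m = 0")
  case False
  then have "0 < enn2real m"
    using assms by (simp add: enn2real_positive_iff less_top[symmetric] zero_less_iff_neq_zero)
  then have "0 < \<Phi> (1 / (D * enn2real m powr (1/p)))"
    using assms by (intro Phi_pos) simp
  then show ?thesis
    using assms False by (simp add: carleson_bound_def inverse_ennreal)
qed (simp add: carleson_bound_def)

text \<open>Here \<open>s\<close> stands for \<open>d(t)\<^sup>1\<^sup>/\<^sup>p\<close>. With \<open>a = 1/(D s)\<close> and \<open>B = 2tDs/c \<le> 1\<close> one has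
  \<open>2t/c = B a\<close>, hence \<open>\<Phi>(2t/c) \<le> B\<^sup>q \<Phi>(a)\<close>.\<close>
lemma Phi_quotient_le:
  assumes D: "0 < D" and c: "0 < c" and t: "0 < t" and s: "0 < s" and small: "2 * D * (t * s) \<le> c"
  shows "2 * (\<Phi> (2*t/c) / \<Phi> (1 / (D * s))) / t \<le> 2 * (2*D/c) powr q * ((t * s) powr q / t)"
proof -
  define a where "a = 1 / (D * s)"
  define B where "B = 2*D/c * (t * s)"
  have a: "0 < a" and Pa: "0 < \<Phi> a" using s D Phi_pos by (auto simp: a_def)
  have B: "0 \<le> B" "B \<le> 1" using small t c D s by (auto simp: B_def field_simps)
  have "2*t/c = B * a" using s D c by (simp add: a_def B_def field_simps)
  then have "\<Phi> (2*t/c) \<le> B powr q * \<Phi> a"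
    using B a by (simp add: Phi_scale_le)
  then have "\<Phi> (2*t/c) / \<Phi> a \<le> B powr q"
    using Pa by (simp add: pos_divide_le_eq)
  then have "2 * (\<Phi> (2*t/c) / \<Phi> a) / t \<le> 2 * B powr q / t"
    using t by (intro divide_right_mono mult_left_mono) auto
  also have "\<dots> = 2 * (2*D/c) powr q * ((t * s) powr q / t)"
    unfolding B_def by (simp only: powr_mult times_divide_eq_right mult.assoc)
  finally show ?thesis unfolding a_def .
qed

lemma nn_integral_Phi_indicator_comp:
  assumes "\<tau> \<in> N \<rightarrow>\<^sub>M M" "E \<in> sets M"
  shows "(\<integral>\<^sup>+ y. ennreal (\<Phi> (\<bar>(indicator E \<circ> \<tau>) y\<bar> / c)) \<partial>N)
    = ennreal (\<Phi> (1/c)) * emeasure N (\<tau> -` E \<inter> space N)"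
proof -
  have "(\<integral>\<^sup>+ y. ennreal (\<Phi> (\<bar>(indicator E \<circ> \<tau>) y\<bar> / c)) \<partial>N)
      = (\<integral>\<^sup>+ y. ennreal (\<Phi> (1/c)) * indicator (\<tau> -` E \<inter> space N) y \<partial>N)"
    by (intro nn_integral_cong) (simp split: split_indicator)
  also have "\<dots> = ennreal (\<Phi> (1/c)) * emeasure N (\<tau> -` E \<inter> space N)"
    using measurable_sets[OF assms] by (rule nn_integral_cmult_indicator)
  finally show ?thesis .
qed

end

locale composition_operator = q_young_function \<Phi> q + M: sigma_finite_measure M + N: sigma_finite_measure N
  for \<Phi> q and M :: "'a measure" and N :: "'b measure" +
  fixes \<tau> :: "'b \<Rightarrow> 'a" and p :: real
  assumes tau_measurable: "\<tau> \<in> N \<rightarrow>\<^sub>M M" and p_pos: "0 < p"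
begin

lemma emeasure_preimage_le_carleson_bound_of_bounded:
  assumes bdd: "\<forall>f. in_lorentz M p q f \<longrightarrow> in_orlicz N \<Phi> (f \<circ> \<tau>) \<and>
      orlicz_norm N \<Phi> (f \<circ> \<tau>) \<le> C * lorentz_norm M p q f"
    and D: "\<bar>C\<bar> * (1/q) powr (1/q) < D"
    and E: "E \<in> sets M" and m: "emeasure M E = ennreal m" "0 < m"
  shows "emeasure N (\<tau> -` E \<inter> space N) \<le> carleson_bound \<Phi> p D (emeasure M E)"
proof -
  have fin: "emeasure M E \<noteq> \<infinity>" using m by simp
  have "0 \<le> \<bar>C\<bar> * (1/q) powr (1/q)" by simp
  with D have D_pos: "0 < D" by linarith
  define c where "c = D * m powr (1/p)"
  have c: "0 < c" using m D_pos by (simp add: c_def)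
  let ?g = "indicator E \<circ> \<tau> :: 'b \<Rightarrow> real"
  have L: "in_lorentz M p q (indicator E :: 'a \<Rightarrow> real)"
    using in_lorentz_indicator[OF E fin p_pos q_pos] .
  then have g: "in_orlicz N \<Phi> ?g" using bdd by blast
  have "orlicz_norm N \<Phi> ?g \<le> C * lorentz_norm M p q (indicator E :: 'a \<Rightarrow> real)"
    using bdd L by blast
  also have "\<dots> \<le> \<bar>C\<bar> * lorentz_norm M p q (indicator E :: 'a \<Rightarrow> real)"
    by (rule mult_right_mono) (simp_all add: lorentz_norm_def)
  also have "\<dots> \<le> \<bar>C\<bar> * ((1/q) powr (1/q) * m powr (1/p))"
    using lorentz_norm_indicator_le[OF E fin p_pos q_pos] m by (intro mult_left_mono) simp_all
  also have "\<dots> < c"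
    using D m by (simp add: c_def mult.assoc[symmetric])
  finally have "ennreal (\<Phi> (1/c)) * emeasure N (\<tau> -` E \<inter> space N) \<le> 1"
    using orlicz_modular_le_one_of_norm_less[OF g]
      nn_integral_Phi_indicator_comp[OF tau_measurable E] by simp
  also have "1 = ennreal (\<Phi> (1/c)) * ennreal (1 / \<Phi> (1/c))"
    using Phi_pos[of "1/c"] c by (simp flip: ennreal_mult)
  finally have "emeasure N (\<tau> -` E \<inter> space N) \<le> ennreal (1 / \<Phi> (1/c))"
    using Phi_pos[of "1/c"] c by (simp add: ennreal_mult_le_mult_iff)
  then show ?thesis
    using m D_pos carleson_bound_pos_real[of D m p] by (simp add: c_def)
qed

lemma carleson_of_bounded:
  assumes ns: "nonsingular N M \<tau>"
    and bdd: "\<forall>f. in_lorentz M p q f \<longrightarrow> in_orlicz N \<Phi> (f \<circ> \<tau>) \<and>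
      orlicz_norm N \<Phi> (f \<circ> \<tau>) \<le> C * lorentz_norm M p q f"
  shows "\<exists>D\<ge>1. \<forall>E\<in>sets M. emeasure N (\<tau> -` E \<inter> space N) \<le> carleson_bound \<Phi> p D (emeasure M E)"
proof (intro exI conjI ballI)
  define D where "D = max 1 (\<bar>C\<bar> * (1/q) powr (1/q) + 1)"
  show "1 \<le> D" by (simp add: D_def)
  fix E assume E: "E \<in> sets M"
  show "emeasure N (\<tau> -` E \<inter> space N) \<le> carleson_bound \<Phi> p D (emeasure M E)"
  proof (cases "emeasure M E = 0 \<or> emeasure M E = \<infinity>")
    case True
    then show ?thesis
      using ns E by (auto simp: nonsingular_def carleson_bound_def)
  next
    case False
    then have "emeasure M E = ennreal (enn2real (emeasure M E))" "0 < enn2real (emeasure M E)"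
      by (auto simp: ennreal_enn2real_if enn2real_positive_iff less_top[symmetric] zero_less_iff_neq_zero)
    then show ?thesis
      using E by (intro emeasure_preimage_le_carleson_bound_of_bounded[OF bdd]) (auto simp: D_def)
  qed
qed

lemma weighted_distrib_comp_mono:
  assumes f: "f \<in> borel_measurable M" and c: "0 < c" and t: "0 < s" "s \<le> t" "t \<le> T"
  shows "ennreal (2 * \<Phi> (2*t/c) / t) * distrib_fun N (f \<circ> \<tau>) t
    \<le> ennreal (2 * \<Phi> (2*T/c) / s) * distrib_fun N (f \<circ> \<tau>) s"
proof (rule mult_mono)
  have "\<Phi> (2*t/c) \<le> \<Phi> (2*T/c)"
    using t c by (intro Phi_mono divide_right_mono) auto
  then have "2 * \<Phi> (2*t/c) / t \<le> 2 * \<Phi> (2*T/c) / s"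
    using t c Phi_nonneg[of "2*t/c"] by (intro frac_le) auto
  then show "ennreal (2 * \<Phi> (2*t/c) / t) \<le> ennreal (2 * \<Phi> (2*T/c) / s)"
    by (rule ennreal_leI)
  show "distrib_fun N (f \<circ> \<tau>) t \<le> distrib_fun N (f \<circ> \<tau>) s"
    using t by (intro distrib_fun_antimono measurable_comp[OF tau_measurable f]) simp
qed simp_all

end

lemma doubling_powr_mult_le_one:
  fixes c D I q :: real
  assumes D: "0 < D" and I: "0 \<le> I" and q: "0 < q" and c: "2 * D * (2 powr (q + 1) * I) powr (1/q) < c"
  shows "2 * (2*D/c) powr q * I \<le> 1"
proof -
  have "(2 powr (q + 1) * I) powr (1/q) \<le> c / (2 * D)"
    using c D by (simp add: field_simps)
  then have "((2 powr (q + 1) * I) powr (1/q)) powr q \<le> (c / (2 * D)) powr q"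
    using q by (intro powr_mono2) auto
  then have "2 powr (q + 1) * I \<le> (c / (2 * D)) powr q"
    using I q by (simp add: powr_powr)
  moreover have "2 * I \<le> 2 powr (q + 1) * I"
  proof (rule mult_right_mono)
    show "2 \<le> 2 powr (q + 1)"
      using powr_mono[of 1 "q + 1" 2] q by simp
  qed (use I in simp)
  ultimately have "2 * I \<le> (c / (2 * D)) powr q" by linarith
  moreover have "0 < c"
  proof -
    have "0 \<le> 2 * D * (2 powr (q + 1) * I) powr (1/q)"
      using D by simp
    with c show ?thesis by linarith
  qed
  ultimately show ?thesis
    using D by (simp add: powr_divide field_simps)
qed

locale carleson_embedding = composition_operator +
  fixes D :: real
  assumes D_pos: "0 < D"
    and carleson: "\<forall>E\<in>sets M. emeasure N (\<tau> -` E \<inter> space N) \<le> carleson_bound \<Phi> p D (emeasure M E)"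
begin

lemma distrib_comp_le_carleson_bound:
  assumes "f \<in> borel_measurable M"
  shows "distrib_fun N (f \<circ> \<tau>) t \<le> carleson_bound \<Phi> p D (distrib_fun M f t)"
proof -
  have "distrib_fun N (f \<circ> \<tau>) t = emeasure N (\<tau> -` {x \<in> space M. t < \<bar>f x\<bar>} \<inter> space N)"
    by (rule distrib_fun_comp[OF tau_measurable])
  also have "\<dots> \<le> carleson_bound \<Phi> p D (emeasure M {x \<in> space M. t < \<bar>f x\<bar>})"
    using carleson distrib_set_in_sets[OF assms] by blast
  finally show ?thesis by (simp add: distrib_fun_def)
qed

lemma weighted_distrib_comp_le_density:
  assumes f: "f \<in> borel_measurable M" and c: "0 < c" and t: "0 < t"
    and small: "2 * D * (t * enn2real (distrib_fun M f t) powr (1/p)) \<le> c"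
  shows "ennreal (2 * \<Phi> (2*t/c) / t) * distrib_fun N (f \<circ> \<tau>) t
    \<le> ennreal (2 * (2*D/c) powr q) * lorentz_density M p q f t"
proof -
  define m where "m = enn2real (distrib_fun M f t)"
  have "distrib_fun M f t = \<infinity> \<or> distrib_fun M f t = 0 \<or> (distrib_fun M f t = ennreal m \<and> 0 < m)"
    unfolding m_def by (cases "distrib_fun M f t") (auto simp: ennreal_eq_0_iff)
  then consider "distrib_fun M f t = \<infinity>" | "distrib_fun M f t = 0" | "distrib_fun M f t = ennreal m" "0 < m"
    by blast
  then show ?thesis
  proof cases
    case 1
    then show ?thesis using t c D_pos by (simp add: lorentz_density_infinite ennreal_mult_top)
  next
    case 2
    then show ?thesis using distrib_comp_le_carleson_bound[OF f, of t] by (simp add: carleson_bound_def)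
  next
    case 3
    define s where "s = m powr (1/p)"
    have s: "0 < s" and Pa: "0 < \<Phi> (1 / (D * s))"
      using 3 D_pos Phi_pos by (simp_all add: s_def)
    have "2 * D * (t * s) \<le> c" using small by (simp add: s_def m_def)
    then have real: "2 * (\<Phi> (2*t/c) / \<Phi> (1 / (D * s))) / t \<le> 2 * (2*D/c) powr q * ((t * s) powr q / t)"
      by (rule Phi_quotient_le[OF D_pos c t s])
    have "ennreal (2 * \<Phi> (2*t/c) / t) * distrib_fun N (f \<circ> \<tau>) t
        \<le> ennreal (2 * \<Phi> (2*t/c) / t) * ennreal (1 / \<Phi> (1 / (D * s)))"
      using distrib_comp_le_carleson_bound[OF f, of t] 3 D_pos
      by (intro mult_left_mono) (simp_all add: carleson_bound_pos_real s_def)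
    also have "\<dots> = ennreal (2 * (\<Phi> (2*t/c) / \<Phi> (1 / (D * s))) / t)"
      using t c Pa Phi_nonneg[of "2*t/c"] by (subst ennreal_mult[symmetric]) (auto simp: ac_simps)
    also have "\<dots> \<le> ennreal (2 * (2*D/c) powr q * ((t * s) powr q / t))"
      using real by (rule ennreal_leI)
    also have "\<dots> = ennreal (2 * (2*D/c) powr q) * ennreal ((t * s) powr q / t)"
      using t by (intro ennreal_mult) auto
    finally show ?thesis
      using 3 t by (simp add: lorentz_density_finite s_def)
  qed
qed

lemma nn_integral_Phi_comp_le:
  assumes L: "in_lorentz M p q f" and c: "0 < c"
    and small: "\<And>t. 0 < t \<Longrightarrow> 2 * D * (t * enn2real (distrib_fun M f t) powr (1/p)) \<le> c"
  shows "(\<integral>\<^sup>+ y. ennreal (\<Phi> (\<bar>f (\<tau> y)\<bar> / c)) \<partial>N)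
    \<le> ennreal (2 * (2*D/c) powr q) * lorentz_integral M p q f"
proof -
  have f[measurable]: "f \<in> borel_measurable M" using L by (simp add: in_lorentz_def)
  have "(\<integral>\<^sup>+ y. ennreal (\<Phi> (\<bar>f (\<tau> y)\<bar> / c)) \<partial>N)
      \<le> (\<integral>\<^sup>+ t. indicator {0<..} t * ennreal (2 * \<Phi> (2*t/c) / t) * distrib_fun N (f \<circ> \<tau>) t \<partial>lborel)"
    using nn_integral_Phi_le_distrib[OF N.sigma_finite_measure_axioms _ c, of "f \<circ> \<tau>"] tau_measurable
    by simp
  also have "\<dots> \<le> (\<integral>\<^sup>+ t. ennreal (2 * (2*D/c) powr q) * lorentz_density M p q f t \<partial>lborel)"
    using weighted_distrib_comp_le_density[OF f c _ small]
    by (intro nn_integral_mono) (simp split: split_indicator)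
  also have "\<dots> = ennreal (2 * (2*D/c) powr q) * lorentz_integral M p q f"
    unfolding lorentz_integral_eq_density
    by (rule nn_integral_cmult[OF borel_measurable_lorentz_density[OF M.sigma_finite_measure_axioms f]])
  finally show ?thesis .
qed

text \<open>Without a size condition on \<open>c\<close>: the weak-type quantity is small near \<open>0\<close> and \<open>\<infinity>\<close>, where
  the previous estimate applies, and on the compact middle range the integrand is bounded.\<close>
lemma nn_integral_Phi_comp_finite:
  assumes L: "in_lorentz M p q f" and c: "0 < c"
  shows "(\<integral>\<^sup>+ y. ennreal (\<Phi> (\<bar>f (\<tau> y)\<bar> / c)) \<partial>N) < \<infinity>"
proof -
  have f[measurable]: "f \<in> borel_measurable M" and fin: "lorentz_integral M p q f < \<infinity>"
    using L by (auto simp: in_lorentz_def)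
  obtain T\<^sub>0 T where T\<^sub>0: "0 < T\<^sub>0"
    and tails: "\<And>t. 0 < t \<Longrightarrow> t \<le> T\<^sub>0 \<or> T \<le> t \<Longrightarrow> t * enn2real (distrib_fun M f t) powr (1/p) \<le> c / (2 * D)"
    using lorentz_weak_tails[OF M.sigma_finite_measure_axioms L p_pos q_pos, of "c / (2 * D)"] c D_pos
    by auto
  define K where "K = ennreal (2 * \<Phi> (2*T/c) / T\<^sub>0) * distrib_fun N (f \<circ> \<tau>) T\<^sub>0"
  have "K \<noteq> \<infinity>"
    using distrib_comp_le_carleson_bound[OF f, of T\<^sub>0]
      carleson_bound_finite[OF D_pos in_lorentz_distrib_finite[OF L T\<^sub>0]]
    by (auto simp: K_def ennreal_mult_eq_top_iff top_unique)
  have pointwise: "indicator {0<..} t * ennreal (2 * \<Phi> (2*t/c) / t) * distrib_fun N (f \<circ> \<tau>) t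
      \<le> ennreal (2 * (2*D/c) powr q) * lorentz_density M p q f t + K * indicator {T\<^sub>0..T} t" for t
  proof (cases "0 < t")
    case t: True
    show ?thesis
    proof (cases "t \<le> T\<^sub>0 \<or> T \<le> t")
      case True
      then have "2 * D * (t * enn2real (distrib_fun M f t) powr (1/p)) \<le> c"
        using tails[OF t] D_pos by (simp add: field_simps)
      then show ?thesis
        using weighted_distrib_comp_le_density[OF f c t] t by (simp add: add_increasing2)
    next
      case False
      then have "ennreal (2 * \<Phi> (2*t/c) / t) * distrib_fun N (f \<circ> \<tau>) t \<le> K"
        unfolding K_def using T\<^sub>0 by (intro weighted_distrib_comp_mono[OF f c]) auto
      then show ?thesis using False t by (simp add: add_increasing)
    qed
  qed simp
  have "(\<integral>\<^sup>+ y. ennreal (\<Phi> (\<bar>f (\<tau> y)\<bar> / c)) \<partial>N)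
      \<le> (\<integral>\<^sup>+ t. indicator {0<..} t * ennreal (2 * \<Phi> (2*t/c) / t) * distrib_fun N (f \<circ> \<tau>) t \<partial>lborel)"
    using nn_integral_Phi_le_distrib[OF N.sigma_finite_measure_axioms _ c, of "f \<circ> \<tau>"] tau_measurable
    by simp
  also have "\<dots> \<le> (\<integral>\<^sup>+ t. ennreal (2 * (2*D/c) powr q) * lorentz_density M p q f t + K * indicator {T\<^sub>0..T} t \<partial>lborel)"
    by (intro nn_integral_mono pointwise)
  also have "\<dots> = ennreal (2 * (2*D/c) powr q) * lorentz_integral M p q f + K * emeasure lborel {T\<^sub>0..T}"
    unfolding lorentz_integral_eq_density using borel_measurable_lorentz_density[OF M.sigma_finite_measure_axioms f]
    by (subst nn_integral_add) (auto simp: nn_integral_cmult nn_integral_cmult_indicator)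
  also have "\<dots> < \<infinity>"
    using fin \<open>K \<noteq> \<infinity>\<close> by (simp add: ennreal_mult_less_top emeasure_lborel_Icc_eq less_top)
  finally show ?thesis .
qed

lemma orlicz_norm_comp_le:
  assumes L: "in_lorentz M p q f"
  shows "orlicz_norm N \<Phi> (f \<circ> \<tau>) \<le> 2 * D * (2 powr (q + 1)) powr (1/q) * lorentz_norm M p q f"
proof -
  define I where "I = enn2real (lorentz_integral M p q f)"
  have I: "0 \<le> I" "lorentz_integral M p q f = ennreal I"
    using L by (auto simp: I_def in_lorentz_def less_top)
  define c\<^sub>0 where "c\<^sub>0 = 2 * D * (2 powr (q + 1) * I) powr (1/q)"
  have c\<^sub>0: "0 \<le> c\<^sub>0" using D_pos by (simp add: c\<^sub>0_def)
  have "orlicz_norm N \<Phi> (f \<circ> \<tau>) \<le> c\<^sub>0"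
  proof (rule orlicz_norm_le_of_gt[OF c\<^sub>0])
    fix c assume "c\<^sub>0 < c"
    with c\<^sub>0 have c: "0 < c" by linarith
    have "2 * D * (t * enn2real (distrib_fun M f t) powr (1/p)) \<le> c" if "0 < t" for t
    proof -
      have "2 * D * (t * enn2real (distrib_fun M f t) powr (1/p)) \<le> c\<^sub>0"
        using lorentz_weak_type[OF L p_pos q_pos that] D_pos by (simp add: c\<^sub>0_def I_def)
      with \<open>c\<^sub>0 < c\<close> show ?thesis by simp
    qed
    then have "(\<integral>\<^sup>+ y. ennreal (\<Phi> (\<bar>(f \<circ> \<tau>) y\<bar> / c)) \<partial>N) \<le> ennreal (2 * (2*D/c) powr q) * ennreal I"
      using nn_integral_Phi_comp_le[OF L c] I by simp
    also have "\<dots> = ennreal (2 * (2*D/c) powr q * I)"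
      using I by (simp add: ennreal_mult)
    also have "\<dots> \<le> 1"
      using doubling_powr_mult_le_one[OF D_pos I(1) q_pos] \<open>c\<^sub>0 < c\<close> unfolding c\<^sub>0_def by simp
    finally show "(\<integral>\<^sup>+ y. ennreal (\<Phi> (\<bar>(f \<circ> \<tau>) y\<bar> / c)) \<partial>N) \<le> 1" .
  qed
  also have "c\<^sub>0 = 2 * D * (2 powr (q + 1)) powr (1/q) * lorentz_norm M p q f"
    by (simp add: c\<^sub>0_def lorentz_norm_def I_def powr_mult)
  finally show ?thesis .
qed

lemma bounded_of_carleson:
  "\<exists>C. \<forall>f. in_lorentz M p q f \<longrightarrow> in_orlicz N \<Phi> (f \<circ> \<tau>) \<and>
    orlicz_norm N \<Phi> (f \<circ> \<tau>) \<le> C * lorentz_norm M p q f"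
proof (intro exI allI impI conjI)
  fix f assume L: "in_lorentz M p q f"
  show "orlicz_norm N \<Phi> (f \<circ> \<tau>) \<le> 2 * D * (2 powr (q + 1)) powr (1/q) * lorentz_norm M p q f"
    using orlicz_norm_comp_le[OF L] .
  have "(\<integral>\<^sup>+ y. ennreal (\<Phi> (\<epsilon> * \<bar>f (\<tau> y)\<bar>)) \<partial>N) < \<infinity>" if "0 < \<epsilon>" for \<epsilon>
    using nn_integral_Phi_comp_finite[OF L, of "1/\<epsilon>"] that by (simp add: mult.commute)
  moreover have "f \<circ> \<tau> \<in> borel_measurable N"
    using L tau_measurable by (auto simp: in_lorentz_def)
  ultimately show "in_orlicz N \<Phi> (f \<circ> \<tau>)"
    by (simp add: in_orlicz_def)
qed

end

theorem theorem1p6: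
  fixes M :: "'a measure" and N :: "'b measure" and \<tau> :: "'b \<Rightarrow> 'a"
    and p q :: real and \<Phi> :: "real \<Rightarrow> real"
  assumes "sigma_finite_measure M" and "sigma_finite_measure N"
    and "\<tau> \<in> N \<rightarrow>\<^sub>M M" and "nonsingular N M \<tau>"
    and "0 < p" and "0 < q"
    and "young_function (\<lambda>t. \<Phi> (t powr (1/q)))"
  shows "(\<exists>C. \<forall>f. in_lorentz M p q f \<longrightarrow>
            in_orlicz N \<Phi> (f \<circ> \<tau>) \<and>
            orlicz_norm N \<Phi> (f \<circ> \<tau>) \<le> C * lorentz_norm M p q f)
     \<longleftrightarrow> (\<exists>D\<ge>1. \<forall>E\<in>sets M.
            emeasure N (\<tau> -` E \<inter> space N) \<le> carleson_bound \<Phi> p D (emeasure M E))"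
proof -
  interpret composition_operator \<Phi> q M N \<tau> p
    using assms by (simp add: composition_operator_def composition_operator_axioms_def q_young_function_def)
  show ?thesis
  proof
    assume "\<exists>C. \<forall>f. in_lorentz M p q f \<longrightarrow> in_orlicz N \<Phi> (f \<circ> \<tau>) \<and>
      orlicz_norm N \<Phi> (f \<circ> \<tau>) \<le> C * lorentz_norm M p q f"
    then show "\<exists>D\<ge>1. \<forall>E\<in>sets M. emeasure N (\<tau> -` E \<inter> space N) \<le> carleson_bound \<Phi> p D (emeasure M E)"
      using carleson_of_bounded[OF assms(4)] by blast
  next
    assume "\<exists>D\<ge>1. \<forall>E\<in>sets M. emeasure N (\<tau> -` E \<inter> space N) \<le> carleson_bound \<Phi> p D (emeasure M E)"
    then obtain D where "1 \<le> D"
      and "\<forall>E\<in>sets M. emeasure N (\<tau> -` E \<inter> space N) \<le> carleson_bound \<Phi> p D (emeasure M E)"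
      by blast
    then interpret carleson_embedding \<Phi> q M N \<tau> p D
      by unfold_locales auto
    show "\<exists>C. \<forall>f. in_lorentz M p q f \<longrightarrow> in_orlicz N \<Phi> (f \<circ> \<tau>) \<and>
      orlicz_norm N \<Phi> (f \<circ> \<tau>) \<le> C * lorentz_norm M p q f"
      by (rule bounded_of_carleson)
  qed
qed

end
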